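(* Let $\mathcal{X}$ be a finite set, $\phi\notin\mathcal{X}$, $L,T\in\mathbb{N}$, positions $i_0,\dots,i_{T-1}\in\{0,\dots,L-1\}$ fixed, and $\Pi_t$ ($t=0,\dots,T-1$) probability distributions on $\mathcal{X}\cup\{\phi\}$. Let $X_0\sim P^*$ on $\mathcal{X}^L$, let $Z_0,\dots,Z_{T-1}$ be independent, independent of $X_0$, with $Z_t\sim\Pi_t$, and define the forward process by $X_{t+1,j}=X_{t,j}$ for $j\ne i_t$, $X_{t+1,i_t}=X_{t,i_t}$ if $Z_t=\phi$, and $X_{t+1,i_t}=Z_t$ if $Z_t\in\mathcal{X}$. Let $P_t$ denote the law of $X_t$. Define the reverse Glauber dynamics as follows: given $\hat X_{t+1}\in\mathcal{X}^L$, set $\hat X_{t,j}=\hat X_{t+1,j}$ for all $j\neq i_t$, and sample $\hat X_{t,i_t}$ from the distribution $a\mapsto\mathbb{P}\big(X_{t,i_t}=a\mid X_{t+1,-i_t}=\hat X_{t+1,-i_t}\big)$ (computed under the forward process). If $\hat X_T\sim P_T$ and $\hat X_0$ is obtained by applying the reverse Glauber dynamics successively for $t=T-1,T-2,\dots,0$, then $\hat X_0\sim P^*$.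
   Context: For $x\in\mathcal{X}^L$ and $i\in\{0,\dots,L-1\}$, $x_i$ is the $i$-th coordinate and $x_{-i}\in\mathcal{X}^{L-1}$ is the sequence obtained by deleting the $i$-th coordinate. *)

theory Defs
  imports "HOL-Probability.Probability"
begin

text \<open>Sequences in X^L are lists of length L; the extra symbol phi is None
  (elements of X are encoded as Some a), so phi is not in X by construction.\<close>

definition del_at :: "nat \<Rightarrow> 'a list \<Rightarrow> 'a list" where
  "del_at i xs = take i xs @ drop (Suc i) xs"

definition fwd_step :: "(nat \<Rightarrow> nat) \<Rightarrow> (nat \<Rightarrow> 'a option pmf) \<Rightarrow> nat \<Rightarrow> 'a list \<Rightarrow> 'a list pmf" where
  "fwd_step pos Pz t x =
     map_pmf (\<lambda>z. case z of None \<Rightarrow> x | Some a \<Rightarrow> x[pos t := a]) (Pz t)"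

fun fwd_law :: "'a list pmf \<Rightarrow> (nat \<Rightarrow> nat) \<Rightarrow> (nat \<Rightarrow> 'a option pmf) \<Rightarrow> nat \<Rightarrow> 'a list pmf" where
  "fwd_law Pstar pos Pz 0 = Pstar"
| "fwd_law Pstar pos Pz (Suc t) = bind_pmf (fwd_law Pstar pos Pz t) (fwd_step pos Pz t)"

definition fwd_joint :: "'a list pmf \<Rightarrow> (nat \<Rightarrow> nat) \<Rightarrow> (nat \<Rightarrow> 'a option pmf) \<Rightarrow> nat \<Rightarrow> ('a list \<times> 'a list) pmf" where
  "fwd_joint Pstar pos Pz t =
     bind_pmf (fwd_law Pstar pos Pz t) (\<lambda>x. map_pmf (\<lambda>x'. (x, x')) (fwd_step pos Pz t x))"

text \<open>When the conditioning event has probability zero (irrelevant under P_{t+1}), y is kept.\<close>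
definition rev_step :: "'a list pmf \<Rightarrow> (nat \<Rightarrow> nat) \<Rightarrow> (nat \<Rightarrow> 'a option pmf) \<Rightarrow> nat \<Rightarrow> 'a list \<Rightarrow> 'a list pmf" where
  "rev_step Pstar pos Pz t y =
     (let J = fwd_joint Pstar pos Pz t;
          A = {(x, x'). del_at (pos t) x' = del_at (pos t) y}
      in if set_pmf J \<inter> A = {} then return_pmf y
         else map_pmf (\<lambda>a. y[pos t := a]) (map_pmf (\<lambda>(x, x'). x ! pos t) (cond_pmf J A)))"

text \<open>rev_iter n Q applies the reverse steps for t = n-1, n-2, ..., 0 to an initial law Q.\<close>
fun rev_iter :: "'a list pmf \<Rightarrow> (nat \<Rightarrow> nat) \<Rightarrow> (nat \<Rightarrow> 'a option pmf) \<Rightarrow> nat \<Rightarrow> 'a list pmf \<Rightarrow> 'a list pmf" where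
  "rev_iter Pstar pos Pz 0 Q = Q"
| "rev_iter Pstar pos Pz (Suc n) Q = rev_iter Pstar pos Pz n (bind_pmf Q (rev_step Pstar pos Pz n))"

end

theory Submission
  imports Defs
begin

text \<open>The forward step at time t changes only coordinate i_t, so X_t and X_{t+1} agree off i_t.
  Hence X_{t,-i_t} and X_{t+1,-i_t} have the same law, and the reverse step from y is just the
  law of X_t conditioned on X_{t,-i_t} = y_{-i_t}. Resampling within the fibres of a map f
  according to the conditional laws of P, starting from any Q with the same f-marginal as P,
  returns P. So each reverse step carries P_{t+1} to P_t, and induction on T concludes.\<close>

lemma del_at_list_update [simp]: "del_at i (xs[i := a]) = del_at i xs"
  unfolding del_at_def by (cases "i < length xs") (auto simp: list_update_beyond)

lemma list_update_nth_eq_if_del_at_eq: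
  assumes "length xs = length ys" "i < length xs" "del_at i xs = del_at i ys"
  shows "ys[i := xs ! i] = xs"
proof -
  have "take i xs = take i ys" "drop (Suc i) xs = drop (Suc i) ys"
    using assms unfolding del_at_def by (simp_all add: append_eq_append_conv)
  then show ?thesis
    using assms by (metis id_take_nth_drop upd_conv_take_nth_drop)
qed

lemma cond_pmf_cong:
  assumes "set_pmf p \<inter> A = set_pmf p \<inter> B" "set_pmf p \<inter> A \<noteq> {}"
  shows "cond_pmf p A = cond_pmf p B"
proof (rule pmf_eqI)
  fix x
  have "set_pmf p \<inter> B \<noteq> {}"
    using assms by simp
  moreover have "measure p A = measure p B"
    by (metis assms(1) measure_Int_set_pmf Int_commute)
  ultimately show "pmf (cond_pmf p A) x = pmf (cond_pmf p B) x"
    using assms unfolding pmf_cond[OF assms(2)] pmf_cond[OF \<open>set_pmf p \<inter> B \<noteq> {}\<close>]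
    by (metis IntI IntD2 pmf_eq_0_set_pmf div_0)
qed

lemma bind_cond_pmf_fibres:
  assumes marginal: "map_pmf f p = map_pmf f q"
  shows "bind_pmf q (\<lambda>y. cond_pmf p {x. f y = f x}) = p"
proof (rule bind_cond_pmf_cancel)
  fix y assume "y \<in> set_pmf q"
  then have "f y \<in> f ` set_pmf p"
    using marginal by (metis imageI pmf.set_map)
  then show "set_pmf p \<inter> {x. f y = f x} \<noteq> {}" by auto
next
  fix x assume "x \<in> set_pmf p"
  then have "f x \<in> f ` set_pmf q"
    using marginal by (metis imageI pmf.set_map)
  then show "set_pmf q \<inter> {y. f y = f x} \<noteq> {}" by auto
next
  fix y x assume "f y = f x"
  have "measure p {x'. f y = f x'} = measure (map_pmf f p) {f y}"
    by (simp add: measure_map_pmf vimage_def eq_commute)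
  also have "\<dots> = measure (map_pmf f q) {f x}"
    using marginal \<open>f y = f x\<close> by simp
  also have "\<dots> = measure q {y'. f y' = f x}"
    by (simp add: measure_map_pmf vimage_def)
  finally show "measure p {x'. f y = f x'} = measure q {y'. f y' = f x}" .
qed

lemma length_fwd_law:
  assumes "set_pmf Pstar \<subseteq> {xs. length xs = L}" "x \<in> set_pmf (fwd_law Pstar pos Pz t)"
  shows "length x = L"
  using assms(2)
  by (induction t arbitrary: x) (use assms(1) in \<open>auto simp: fwd_step_def split: option.splits\<close>)

lemma del_at_fwd_step:
  "map_pmf (del_at (pos t)) (fwd_step pos Pz t x) = return_pmf (del_at (pos t) x)"
proof -
  have "map_pmf (del_at (pos t)) (fwd_step pos Pz t x) = map_pmf (\<lambda>_. del_at (pos t) x) (Pz t)"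
    unfolding fwd_step_def map_pmf_comp
    by (intro map_pmf_cong refl) (auto split: option.splits)
  then show ?thesis by simp
qed

lemma del_at_fwd_law_Suc:
  "map_pmf (del_at (pos t)) (fwd_law Pstar pos Pz (Suc t)) =
     map_pmf (del_at (pos t)) (fwd_law Pstar pos Pz t)"
  unfolding fwd_law.simps map_bind_pmf del_at_fwd_step by (simp add: map_pmf_def)

lemma fst_fwd_joint: "map_pmf fst (fwd_joint Pstar pos Pz t) = fwd_law Pstar pos Pz t"
  unfolding fwd_joint_def by (simp add: map_bind_pmf map_pmf_comp bind_return_pmf')

lemma del_at_eq_if_in_fwd_joint:
  "(x, x') \<in> set_pmf (fwd_joint Pstar pos Pz t) \<Longrightarrow> del_at (pos t) x' = del_at (pos t) x"
  unfolding fwd_joint_def fwd_step_def by (auto split: option.splits)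

lemma rev_step_eq_cond_pmf:
  assumes len: "set_pmf Pstar \<subseteq> {xs. length xs = L}" and pos: "pos t < L"
    and y: "y \<in> set_pmf (fwd_law Pstar pos Pz (Suc t))"
  shows "rev_step Pstar pos Pz t y =
           cond_pmf (fwd_law Pstar pos Pz t) {x. del_at (pos t) y = del_at (pos t) x}"
proof -
  define J where "J = fwd_joint Pstar pos Pz t"
  define A where "A = {(x :: 'a list, x'). del_at (pos t) x' = del_at (pos t) y}"
  define S where "S = {x. del_at (pos t) y = del_at (pos t) x}"
  have "(x0, y) \<in> set_pmf J" if "x0 \<in> set_pmf (fwd_law Pstar pos Pz t)"
    "y \<in> set_pmf (fwd_step pos Pz t x0)" for x0
    using that unfolding J_def fwd_joint_def by auto
  then have nonempty: "set_pmf J \<inter> A \<noteq> {}"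
    using y unfolding A_def by fastforce
  have support: "set_pmf J \<inter> A = set_pmf J \<inter> fst -` S"
    unfolding A_def S_def J_def using del_at_eq_if_in_fwd_joint by fastforce
  have "rev_step Pstar pos Pz t y = map_pmf (\<lambda>z. y[pos t := fst z ! pos t]) (cond_pmf J A)"
    unfolding rev_step_def Let_def J_def[symmetric] A_def[symmetric] using nonempty
    by (simp add: map_pmf_comp case_prod_beta)
  also have "\<dots> = map_pmf fst (cond_pmf J A)"
  proof (intro map_pmf_cong refl)
    fix z assume z: "z \<in> set_pmf (cond_pmf J A)"
    obtain x x' where [simp]: "z = (x, x')" by fastforce
    have "(x, x') \<in> set_pmf J" "(x, x') \<in> A"
      using z nonempty by auto
    then have "x \<in> set_pmf (fwd_law Pstar pos Pz t)" "del_at (pos t) x = del_at (pos t) y"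
      unfolding J_def A_def
      by (metis fst_fwd_joint fst_conv imageI pmf.set_map, auto dest: del_at_eq_if_in_fwd_joint)
    then show "y[pos t := fst z ! pos t] = fst z"
      using list_update_nth_eq_if_del_at_eq[of x y "pos t"] pos
        length_fwd_law[OF len] y by auto
  qed
  also have "\<dots> = map_pmf fst (cond_pmf J (fst -` S))"
    using cond_pmf_cong[OF support nonempty] by simp
  also have "\<dots> = cond_pmf (map_pmf fst J) S"
    using support nonempty by (intro cond_map_pmf[symmetric]) simp
  finally show ?thesis
    unfolding J_def fst_fwd_joint S_def .
qed

lemma bind_fwd_law_Suc_rev_step:
  assumes "set_pmf Pstar \<subseteq> {xs. length xs = L}" "pos t < L"
  shows "bind_pmf (fwd_law Pstar pos Pz (Suc t)) (rev_step Pstar pos Pz t) = fwd_law Pstar pos Pz t"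
proof -
  have "bind_pmf (fwd_law Pstar pos Pz (Suc t)) (rev_step Pstar pos Pz t) =
      bind_pmf (fwd_law Pstar pos Pz (Suc t))
        (\<lambda>y. cond_pmf (fwd_law Pstar pos Pz t) {x. del_at (pos t) y = del_at (pos t) x})"
    using rev_step_eq_cond_pmf[where pos = pos and t = t, OF assms] by (intro bind_pmf_cong) auto
  also have "\<dots> = fwd_law Pstar pos Pz t"
    by (intro bind_cond_pmf_fibres del_at_fwd_law_Suc[symmetric])
  finally show ?thesis .
qed

lemma rev_iter_fwd_law:
  assumes "set_pmf Pstar \<subseteq> {xs. length xs = L}" "\<And>t. t < n \<Longrightarrow> pos t < L"
  shows "rev_iter Pstar pos Pz n (fwd_law Pstar pos Pz n) = Pstar"
  using assms(2)
proof (induction n)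
  case 0
  then show ?case by simp
next
  case (Suc n)
  then show ?case
    using bind_fwd_law_Suc_rev_step[OF assms(1)] by simp
qed

theorem lemma2:
  fixes X :: "'a set" and L T :: nat and pos :: "nat \<Rightarrow> nat"
    and Pz :: "nat \<Rightarrow> 'a option pmf" and Pstar :: "'a list pmf"
  assumes "finite X"
    and "\<And>t. t < T \<Longrightarrow> pos t < L"
    and "\<And>t. t < T \<Longrightarrow> set_pmf (Pz t) \<subseteq> Some ` X \<union> {None}"
    and "set_pmf Pstar \<subseteq> {xs. length xs = L \<and> set xs \<subseteq> X}"
  shows "rev_iter Pstar pos Pz T (fwd_law Pstar pos Pz T) = Pstar"
proof (rule rev_iter_fwd_law)
  show "set_pmf Pstar \<subseteq> {xs. length xs = L}"
    using assms(4) by auto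
qed (use assms(2) in simp)

end
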